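(* Let $p$ be a stochastic choice function on $X$. The following are equivalent: (i) $p$ is rationalized by an MSC $\langle Q,\nu\rangle$ such that for every $M\in\mathcal N$ the matrix $Q(M)$ is fully comparable and reversible on $M$; (ii) $p$ is positive and satisfies independence of irrelevant alternatives, i.e. $p(i,\{i,j\})\,p(j,M)=p(j,\{i,j\})\,p(i,M)$ for all $M\in\mathcal N$ and $i,j\in M$; (iii) $p$ is rationalized by an MSC $\langle Q,\nu\rangle$ for which there is a function $u:X\to(0,\infty)$ such that for all $M\in\mathcal N$ and distinct $i,j\in M$, $q_{ij}(M)>0$ and $\dfrac{q_{ij}(M)}{q_{ji}(M)}=\dfrac{u(j)}{u(i)}$.
   Context: $X$ is a finite set of alternatives; a menu is a nonempty subset of $X$, and $\mathcal N$ denotes the set of all menus. A stochastic choice function is a map $p:X\times\mathcal N\to[0,1]$ with $\sum_{i\in M}p(i,M)=1$ and $p(i,M)=0$ for $i\notin M$; $p(\cdot,M)$ denotes the row vector $(p(i,M))_{i\in M}$. $p$ is positive if $p(i,M)>0$ for all $M\in\mathcal N$ and $i\in M$. An MSC (Markov stochastic choice model) $\langle Q,\nu\rangle$ consists of, for every menu $M$, a matrix $Q(M)=(q_{ij}(M))_{i,j\in M}$ with nonnegative entries and a probability distribution $\nu_M$ on $M$, such that for all $M\in\mathcal N$ and distinct $i,j\in M$: (A1) $q_{ii}(M)=1-\sum_{k\neq i}q_{ik}(M)>0$; (A2) if $q_{ij}(\{i,j\})=0$ then $q_{ji}(\{i,j\})>0$; (A3) $q_{ij}(\{i,j\})\,q_{ji}(M)=q_{ji}(\{i,j\})\,q_{ij}(M)$.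 For a right stochastic matrix $Q$ on $M$ and a distribution $\nu$ on $M$ define $\rho(\nu,Q)=\lim_{\alpha\to0^+}\sum_{t\ge0}\alpha(1-\alpha)^t\nu Q^t$ (the limit exists and satisfies $\rho(\nu,Q)(I-Q)=0$). $p$ is rationalized by the MSC $\langle Q,\nu\rangle$ if $p(\cdot,M)=\rho(\nu_M,Q(M))$ for every $M\in\mathcal N$. $Q(M)$ is fully comparable if $q_{ij}(M)>0$ for all distinct $i,j\in M$. $Q(M)$ is reversible on $M$ if, with $\rho=\rho(\nu_M,Q(M))$, $q_{ji}(M)\rho_j=\rho_i\,q_{ij}(M)$ for all $i,j\in M$. *)

theory Defs
  imports "HOL-Analysis.Analysis"
begin

(* The finite set X of alternatives is the universe of a finite type 'a.
   A menu is a nonempty subset of X. *)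
definition menu :: "'a::finite set \<Rightarrow> bool" where
  "menu M \<longleftrightarrow> M \<noteq> {}"

definition stoch_choice :: "('a::finite \<Rightarrow> 'a set \<Rightarrow> real) \<Rightarrow> bool" where
  "stoch_choice p \<longleftrightarrow>
     (\<forall>M. menu M \<longrightarrow>
        (\<forall>i. 0 \<le> p i M \<and> p i M \<le> 1) \<and>
        (\<Sum>i\<in>M. p i M) = 1 \<and>
        (\<forall>i. i \<notin> M \<longrightarrow> p i M = 0))"

definition positive_sc :: "('a::finite \<Rightarrow> 'a set \<Rightarrow> real) \<Rightarrow> bool" where
  "positive_sc p \<longleftrightarrow> (\<forall>M. menu M \<longrightarrow> (\<forall>i\<in>M. p i M > 0))"

definition iia :: "('a::finite \<Rightarrow> 'a set \<Rightarrow> real) \<Rightarrow> bool" where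
  "iia p \<longleftrightarrow> (\<forall>M. menu M \<longrightarrow> (\<forall>i\<in>M. \<forall>j\<in>M.
      p i {i, j} * p j M = p j {i, j} * p i M))"

fun matpow :: "'a set \<Rightarrow> ('a \<Rightarrow> 'a \<Rightarrow> real) \<Rightarrow> nat \<Rightarrow> 'a \<Rightarrow> 'a \<Rightarrow> real" where
  "matpow M Q 0 i j = (if i = j then 1 else 0)"
| "matpow M Q (Suc t) i j = (\<Sum>k\<in>M. matpow M Q t i k * Q k j)"

definition vecmatpow :: "'a set \<Rightarrow> ('a \<Rightarrow> real) \<Rightarrow> ('a \<Rightarrow> 'a \<Rightarrow> real) \<Rightarrow> nat \<Rightarrow> 'a \<Rightarrow> real" where
  "vecmatpow M nu Q t j = (\<Sum>i\<in>M. nu i * matpow M Q t i j)"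

definition rho :: "'a set \<Rightarrow> ('a \<Rightarrow> real) \<Rightarrow> ('a \<Rightarrow> 'a \<Rightarrow> real) \<Rightarrow> 'a \<Rightarrow> real" where
  "rho M nu Q j = Lim (at_right 0)
      (\<lambda>\<alpha>::real. \<Sum>t. \<alpha> * (1 - \<alpha>) ^ t * vecmatpow M nu Q t j)"

(* Markov stochastic choice model <Q, nu>: Q M i j = q_ij(M), nu M i = nu_M(i) *)
definition MSC :: "('a::finite set \<Rightarrow> 'a \<Rightarrow> 'a \<Rightarrow> real) \<Rightarrow> ('a set \<Rightarrow> 'a \<Rightarrow> real) \<Rightarrow> bool" where
  "MSC Q nu \<longleftrightarrow>
     (\<forall>M. menu M \<longrightarrow>
        (\<forall>i\<in>M. \<forall>j\<in>M. Q M i j \<ge> 0) \<and>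
        (\<forall>i\<in>M. nu M i \<ge> 0) \<and> (\<Sum>i\<in>M. nu M i) = 1 \<and>
        (\<forall>i\<in>M. Q M i i = 1 - (\<Sum>k\<in>M - {i}. Q M i k) \<and> Q M i i > 0) \<and>
        (\<forall>i\<in>M. \<forall>j\<in>M. i \<noteq> j \<longrightarrow>
            (Q {i, j} i j = 0 \<longrightarrow> Q {i, j} j i > 0) \<and>
            Q {i, j} i j * Q M j i = Q {i, j} j i * Q M i j))"

definition rationalizes :: "('a::finite set \<Rightarrow> 'a \<Rightarrow> 'a \<Rightarrow> real) \<Rightarrow> ('a set \<Rightarrow> 'a \<Rightarrow> real)
    \<Rightarrow> ('a \<Rightarrow> 'a set \<Rightarrow> real) \<Rightarrow> bool" where
  "rationalizes Q nu p \<longleftrightarrow> MSC Q nu \<and>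
     (\<forall>M. menu M \<longrightarrow> (\<forall>i\<in>M. p i M = rho M (nu M) (Q M) i))"

definition fully_comparable :: "'a set \<Rightarrow> ('a \<Rightarrow> 'a \<Rightarrow> real) \<Rightarrow> bool" where
  "fully_comparable M Q \<longleftrightarrow> (\<forall>i\<in>M. \<forall>j\<in>M. i \<noteq> j \<longrightarrow> Q i j > 0)"

definition reversible :: "'a set \<Rightarrow> ('a \<Rightarrow> real) \<Rightarrow> ('a \<Rightarrow> 'a \<Rightarrow> real) \<Rightarrow> bool" where
  "reversible M nu Q \<longleftrightarrow>
     (\<forall>i\<in>M. \<forall>j\<in>M. Q j i * rho M nu Q j = rho M nu Q i * Q i j)"

end

theory Submission
  imports Defs
begin

text \<open>Under (ii), applying IIA in \<open>M\<close> and in \<open>X\<close> shows that \<open>p(\<cdot>, M)\<close> is proportional on \<open>M\<close>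
  to \<open>u = p(\<cdot>, X)\<close>. The chain moving from \<open>i\<close> to \<open>j \<noteq> i\<close> with probability \<open>u(j)/2\<close> is
  in detailed balance with \<open>p(\<cdot>, M)\<close>; started there, \<open>\<nu> Q\<^sup>t\<close> is constant, so \<open>\<rho> = p(\<cdot>, M)\<close>,
  which gives (i) and (iii).
  Conversely, under (i) reversibility and full comparability force positivity, and
  condition (A3) on the pair \<open>{i, j}\<close> turns the two detailed-balance equations into IIA.
  Under (iii), \<open>u\<close> normalised on \<open>M\<close> is a reversible distribution of the positive matrix
  \<open>Q(M)\<close>; a contraction argument shows that \<open>\<nu> Q\<^sup>t\<close> converges to it geometrically, whence
  the Luce form \<open>p(i, M) = u(i) / \<Sum>\<^sub>M u\<close>, which is positive and satisfies IIA.\<close>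

lemma vecmatpow_0: "finite M \<Longrightarrow> j \<in> M \<Longrightarrow> vecmatpow M nu Q 0 j = nu j"
  unfolding vecmatpow_def by (simp add: if_distrib cong: if_cong)

lemma vecmatpow_Suc: "vecmatpow M nu Q (Suc t) j = (\<Sum>k\<in>M. vecmatpow M nu Q t k * Q k j)"
proof -
  have "vecmatpow M nu Q (Suc t) j = (\<Sum>i\<in>M. \<Sum>k\<in>M. nu i * matpow M Q t i k * Q k j)"
    by (simp add: vecmatpow_def sum_distrib_left mult.assoc)
  also have "\<dots> = (\<Sum>k\<in>M. (\<Sum>i\<in>M. nu i * matpow M Q t i k) * Q k j)"
    by (subst sum.swap) (simp add: sum_distrib_right)
  finally show ?thesis by (simp add: vecmatpow_def)
qed

lemma vecmatpow_sum:
  assumes "finite M" and "\<And>i. i \<in> M \<Longrightarrow> (\<Sum>j\<in>M. Q i j) = 1" and "(\<Sum>i\<in>M. nu i) = 1"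
  shows "(\<Sum>k\<in>M. vecmatpow M nu Q t k) = 1"
proof (induction t)
  case 0
  then show ?case using assms by (simp add: vecmatpow_0)
next
  case (Suc t)
  have "(\<Sum>k\<in>M. vecmatpow M nu Q (Suc t) k) = (\<Sum>i\<in>M. vecmatpow M nu Q t i * (\<Sum>k\<in>M. Q i k))"
    by (simp add: vecmatpow_Suc sum_distrib_left) (rule sum.swap)
  also have "\<dots> = 1" using Suc.IH assms(2) by simp
  finally show ?case .
qed

lemma vecmatpow_stationary:
  assumes "finite M" and "\<And>j. j \<in> M \<Longrightarrow> (\<Sum>i\<in>M. nu i * Q i j) = nu j" and "j \<in> M"
  shows "vecmatpow M nu Q t j = nu j"
  using assms(3)
proof (induction t arbitrary: j)
  case 0
  then show ?case by (rule vecmatpow_0[OF assms(1)])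
next
  case (Suc t)
  then show ?case using assms(2) by (simp add: vecmatpow_Suc)
qed

lemma detailed_balance_imp_stationary:
  fixes w :: "'a \<Rightarrow> real"
  assumes "\<And>i j. i \<in> M \<Longrightarrow> j \<in> M \<Longrightarrow> w i * Q i j = w j * Q j i"
    and "\<And>i. i \<in> M \<Longrightarrow> (\<Sum>j\<in>M. Q i j) = 1" and "k \<in> M"
  shows "(\<Sum>i\<in>M. w i * Q i k) = w k"
proof -
  have "(\<Sum>i\<in>M. w i * Q i k) = (\<Sum>i\<in>M. w k * Q k i)"
    using assms(1,3) by (intro sum.cong) auto
  also have "\<dots> = w k * (\<Sum>i\<in>M. Q k i)" by (rule sum_distrib_left[symmetric])
  also have "\<dots> = w k" using assms(2,3) by simp
  finally show ?thesis .
qed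

lemma abel_weights_sums:
  fixes \<alpha> c :: real
  assumes "0 < \<alpha>" "\<alpha> < 1"
  shows "(\<lambda>t. \<alpha> * (1 - \<alpha>) ^ t * c) sums c"
proof -
  have "(\<lambda>t. (\<alpha> * c) * (1 - \<alpha>) ^ t) sums ((\<alpha> * c) * (1 / (1 - (1 - \<alpha>))))"
    by (intro sums_mult geometric_sums) (use assms in auto)
  then show ?thesis using assms by (simp add: mult_ac)
qed

lemma abel_mean_dist_le:
  fixes a :: "nat \<Rightarrow> real"
  assumes bound: "\<And>t. \<bar>a t - c\<bar> \<le> C * r ^ t" and "0 \<le> r" "r < 1"
    and \<alpha>: "0 < \<alpha>" "\<alpha> < 1"
  shows "\<bar>(\<Sum>t. \<alpha> * (1 - \<alpha>) ^ t * a t) - c\<bar> \<le> \<alpha> * (C / (1 - r))"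
proof -
  define d where "d t = (1 - \<alpha>) ^ t * (a t - c)" for t
  have d_le: "norm (d t) \<le> C * r ^ t" for t
  proof -
    have "norm (d t) = (1 - \<alpha>) ^ t * \<bar>a t - c\<bar>" using \<alpha> by (simp add: d_def abs_mult)
    also have "\<dots> \<le> 1 * (C * r ^ t)"
      using \<alpha> bound[of t] by (intro mult_mono power_le_one) auto
    finally show ?thesis by simp
  qed
  have geom: "(\<lambda>t. C * r ^ t) sums (C / (1 - r))"
    using sums_mult[OF geometric_sums, of r C] assms(2,3) by simp
  then have geom_summable: "summable (\<lambda>t. C * r ^ t)" by (simp add: sums_iff)
  have norm_d_summable: "summable (\<lambda>t. norm (d t))"
    by (rule summable_comparison_test'[OF geom_summable, where N = 0]) (use d_le in simp)
  then have d_summable: "summable d" by (rule summable_norm_cancel)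
  have "(\<lambda>t. \<alpha> * d t + \<alpha> * (1 - \<alpha>) ^ t * c) sums (\<alpha> * suminf d + c)"
    by (intro sums_add sums_mult summable_sums d_summable abel_weights_sums \<alpha>)
  moreover have "(\<lambda>t. \<alpha> * d t + \<alpha> * (1 - \<alpha>) ^ t * c) = (\<lambda>t. \<alpha> * (1 - \<alpha>) ^ t * a t)"
    by (simp add: d_def fun_eq_iff algebra_simps)
  ultimately have sum_eq: "(\<Sum>t. \<alpha> * (1 - \<alpha>) ^ t * a t) = \<alpha> * suminf d + c"
    by (simp add: sums_iff)
  have "\<bar>suminf d\<bar> \<le> (\<Sum>t. norm (d t))"
    using summable_norm[OF norm_d_summable] by simp
  also have "\<dots> \<le> (\<Sum>t. C * r ^ t)"
    by (rule suminf_le[OF d_le norm_d_summable geom_summable])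
  also have "\<dots> = C / (1 - r)"
    using geom by (simp add: sums_iff)
  finally have "\<alpha> * \<bar>suminf d\<bar> \<le> \<alpha> * (C / (1 - r))"
    using \<alpha> by (intro mult_left_mono) auto
  then show ?thesis using \<alpha> by (simp add: sum_eq abs_mult)
qed

lemma abel_mean_tendsto_geometric:
  fixes a :: "nat \<Rightarrow> real"
  assumes "\<And>t. \<bar>a t - c\<bar> \<le> C * r ^ t" and "0 \<le> r" "r < 1"
  shows "((\<lambda>\<alpha>. \<Sum>t. \<alpha> * (1 - \<alpha>) ^ t * a t) \<longlongrightarrow> c) (at_right 0)"
proof -
  have "eventually (\<lambda>\<alpha>::real. \<alpha> \<in> {0<..<1}) (at_right 0)"
    by (rule eventually_at_right_real) simp
  then have "eventually (\<lambda>\<alpha>. norm ((\<Sum>t. \<alpha> * (1 - \<alpha>) ^ t * a t) - c) \<le> \<alpha> * (C / (1 - r)))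
      (at_right 0)"
    by eventually_elim (use abel_mean_dist_le[OF assms] in auto)
  moreover have "((\<lambda>\<alpha>::real. \<alpha> * (C / (1 - r))) \<longlongrightarrow> 0) (at_right 0)"
    by (rule tendsto_mult_left_zero[OF tendsto_ident_at])
  ultimately have "((\<lambda>\<alpha>. (\<Sum>t. \<alpha> * (1 - \<alpha>) ^ t * a t) - c) \<longlongrightarrow> 0) (at_right 0)"
    by (rule Lim_null_comparison)
  then show ?thesis by (rule LIM_zero_cancel)
qed

lemma rho_eqI:
  assumes "\<And>t. \<bar>vecmatpow M nu Q t j - c\<bar> \<le> C * r ^ t" and "0 \<le> r" "r < 1"
  shows "rho M nu Q j = c"
  unfolding rho_def
  by (rule tendsto_Lim[OF _ abel_mean_tendsto_geometric[OF assms]])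
    (simp add: trivial_limit_at_right_real)

lemma rho_stationary:
  assumes "finite M" and "\<And>j. j \<in> M \<Longrightarrow> (\<Sum>i\<in>M. nu i * Q i j) = nu j" and "j \<in> M"
  shows "rho M nu Q j = nu j"
  by (rule rho_eqI[where C = 0 and r = 0]) (simp_all add: vecmatpow_stationary[OF assms])

lemma stochastic_average_le:
  fixes q x :: "'a \<Rightarrow> real"
  assumes fin: "finite M" and i0: "i0 \<in> M"
    and nonneg: "\<And>i. i \<in> M \<Longrightarrow> 0 \<le> q i" and total: "(\<Sum>i\<in>M. q i) = 1"
    and weight: "\<delta> \<le> q i0" and upper: "\<And>i. i \<in> M \<Longrightarrow> x i \<le> hi"
  shows "(\<Sum>i\<in>M. q i * x i) \<le> hi - \<delta> * (hi - x i0)"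
proof -
  have "(\<Sum>i\<in>M. q i * x i) = q i0 * x i0 + (\<Sum>i\<in>M - {i0}. q i * x i)"
    using fin i0 by (simp add: sum.remove)
  also have "\<dots> \<le> q i0 * x i0 + (\<Sum>i\<in>M - {i0}. q i * hi)"
    by (intro add_left_mono sum_mono mult_left_mono) (auto simp: upper nonneg)
  also have "(\<Sum>i\<in>M - {i0}. q i * hi) = (1 - q i0) * hi"
    using fin i0 total by (simp add: sum_distrib_right[symmetric] sum.remove)
  also have "q i0 * x i0 + (1 - q i0) * hi = hi - q i0 * (hi - x i0)"
    by (simp add: algebra_simps)
  also have "\<dots> \<le> hi - \<delta> * (hi - x i0)"
    using weight upper[OF i0] by (simp add: mult_right_mono)
  finally show ?thesis .
qed

lemma stochastic_average_ge:
  fixes q x :: "'a \<Rightarrow> real"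
  assumes "finite M" and "i0 \<in> M"
    and "\<And>i. i \<in> M \<Longrightarrow> 0 \<le> q i" and "(\<Sum>i\<in>M. q i) = 1"
    and "\<delta> \<le> q i0" and "\<And>i. i \<in> M \<Longrightarrow> lo \<le> x i"
  shows "lo + \<delta> * (x i0 - lo) \<le> (\<Sum>i\<in>M. q i * x i)"
  using stochastic_average_le[of M i0 q \<delta> "\<lambda>i. - x i" "- lo"] assms
  by (simp add: sum_negf algebra_simps)

lemma oscillation_contraction:
  fixes Q :: "'a \<Rightarrow> 'a \<Rightarrow> real" and x :: "'a \<Rightarrow> real"
  assumes fin: "finite M" and ne: "M \<noteq> {}" and "0 \<le> \<delta>"
    and lower: "\<And>k i. k \<in> M \<Longrightarrow> i \<in> M \<Longrightarrow> \<delta> \<le> Q k i"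
    and row: "\<And>k. k \<in> M \<Longrightarrow> (\<Sum>i\<in>M. Q k i) = 1"
  shows "Max ((\<lambda>k. \<Sum>i\<in>M. Q k i * x i) ` M) - Min ((\<lambda>k. \<Sum>i\<in>M. Q k i * x i) ` M)
    \<le> (1 - \<delta>) * (Max (x ` M) - Min (x ` M))"
proof -
  define hi where "hi = Max (x ` M)"
  define lo where "lo = Min (x ` M)"
  have bounds: "lo \<le> x i" "x i \<le> hi" if "i \<in> M" for i
    using fin that by (auto simp: lo_def hi_def)
  have "lo \<in> x ` M" "hi \<in> x ` M"
    using fin ne by (simp_all add: lo_def hi_def)
  then obtain imin imax where imin: "imin \<in> M" "x imin = lo" and imax: "imax \<in> M" "x imax = hi"
    by auto
  have nonneg: "0 \<le> Q k i" if "k \<in> M" "i \<in> M" for k i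
    using lower[OF that] \<open>0 \<le> \<delta>\<close> by linarith
  have "(\<Sum>i\<in>M. Q k i * x i) \<le> hi - \<delta> * (hi - lo)" if k: "k \<in> M" for k
    using stochastic_average_le[OF fin imin(1), of "Q k" \<delta> x hi]
    by (simp add: imin nonneg k row lower bounds)
  then have max_le: "Max ((\<lambda>k. \<Sum>i\<in>M. Q k i * x i) ` M) \<le> hi - \<delta> * (hi - lo)"
    using fin ne by simp
  have "lo + \<delta> * (hi - lo) \<le> (\<Sum>i\<in>M. Q k i * x i)" if k: "k \<in> M" for k
    using stochastic_average_ge[OF fin imax(1), of "Q k" \<delta> lo x]
    by (simp add: imax nonneg k row lower bounds)
  then have min_ge: "lo + \<delta> * (hi - lo) \<le> Min ((\<lambda>k. \<Sum>i\<in>M. Q k i * x i) ` M)"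
    using fin ne by simp
  have "0 \<le> \<delta> * (hi - lo)"
    using \<open>0 \<le> \<delta>\<close> bounds[OF imin(1)] imax by simp
  with max_le min_ge show ?thesis by (simp add: hi_def lo_def algebra_simps)
qed

lemma weighted_mean_between_Min_Max:
  fixes w x :: "'a \<Rightarrow> real"
  assumes fin: "finite M" and w_nonneg: "\<And>i. i \<in> M \<Longrightarrow> 0 \<le> w i"
    and w_sum: "(\<Sum>i\<in>M. w i) = 1" and mean: "(\<Sum>i\<in>M. w i * x i) = m"
  shows "Min (x ` M) \<le> m" and "m \<le> Max (x ` M)"
proof -
  have "(\<Sum>i\<in>M. w i * Min (x ` M)) \<le> (\<Sum>i\<in>M. w i * x i)"
    and "(\<Sum>i\<in>M. w i * x i) \<le> (\<Sum>i\<in>M. w i * Max (x ` M))"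
    using fin by (auto intro!: sum_mono mult_left_mono simp: w_nonneg)
  then show "Min (x ` M) \<le> m" and "m \<le> Max (x ` M)"
    by (simp_all add: mean sum_distrib_right[symmetric] w_sum)
qed

lemma stochastic_matrix_uniform_lower_bound:
  fixes Q :: "'a \<Rightarrow> 'a \<Rightarrow> real"
  assumes fin: "finite M" and ne: "M \<noteq> {}"
    and Q_pos: "\<And>i k. i \<in> M \<Longrightarrow> k \<in> M \<Longrightarrow> 0 < Q i k"
    and row: "\<And>i. i \<in> M \<Longrightarrow> (\<Sum>k\<in>M. Q i k) = 1"
  obtains \<delta> where "0 < \<delta>" "\<delta> \<le> 1" "\<And>i k. i \<in> M \<Longrightarrow> k \<in> M \<Longrightarrow> \<delta> \<le> Q i k"
proof
  define \<delta> where "\<delta> = Min (case_prod Q ` (M \<times> M))"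
  show \<delta>_le: "\<delta> \<le> Q i k" if "i \<in> M" "k \<in> M" for i k
    unfolding \<delta>_def using fin that by (intro Min_le) auto
  show "0 < \<delta>"
    using fin ne Q_pos by (auto simp: \<delta>_def Min_gr_iff)
  obtain j where j: "j \<in> M" using ne by blast
  have "Q j j \<le> (\<Sum>k\<in>M. Q j k)"
    using fin j Q_pos by (intro member_le_sum) (auto simp: less_imp_le)
  then show "\<delta> \<le> 1" using \<delta>_le[OF j j] row[OF j] by simp
qed

lemma reversible_ratio_step:
  fixes Q :: "'a \<Rightarrow> 'a \<Rightarrow> real" and nu w :: "'a \<Rightarrow> real"
  assumes w_pos: "\<And>i. i \<in> M \<Longrightarrow> 0 < w i"
    and balance: "\<And>i k. i \<in> M \<Longrightarrow> k \<in> M \<Longrightarrow> w i * Q i k = w k * Q k i"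
    and k: "k \<in> M"
  shows "vecmatpow M nu Q (Suc t) k / w k = (\<Sum>i\<in>M. Q k i * (vecmatpow M nu Q t i / w i))"
proof -
  have w_nonzero: "w i \<noteq> 0" if "i \<in> M" for i
    using w_pos[OF that] by simp
  have "vecmatpow M nu Q (Suc t) k = (\<Sum>i\<in>M. vecmatpow M nu Q t i / w i * (w i * Q i k))"
    unfolding vecmatpow_Suc by (intro sum.cong) (simp_all add: w_nonzero)
  also have "\<dots> = (\<Sum>i\<in>M. vecmatpow M nu Q t i / w i * (w k * Q k i))"
    using k by (intro sum.cong) (simp_all add: balance)
  also have "\<dots> = w k * (\<Sum>i\<in>M. Q k i * (vecmatpow M nu Q t i / w i))"
    by (simp add: sum_distrib_left mult_ac)
  finally show ?thesis using w_pos[OF k] by simp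
qed

lemma rho_eq_reversible_distribution:
  fixes Q :: "'a \<Rightarrow> 'a \<Rightarrow> real" and nu w :: "'a \<Rightarrow> real"
  assumes fin: "finite M" and ne: "M \<noteq> {}"
    and Q_pos: "\<And>i k. i \<in> M \<Longrightarrow> k \<in> M \<Longrightarrow> 0 < Q i k"
    and row: "\<And>i. i \<in> M \<Longrightarrow> (\<Sum>k\<in>M. Q i k) = 1"
    and w_pos: "\<And>i. i \<in> M \<Longrightarrow> 0 < w i" and w_sum: "(\<Sum>i\<in>M. w i) = 1"
    and balance: "\<And>i k. i \<in> M \<Longrightarrow> k \<in> M \<Longrightarrow> w i * Q i k = w k * Q k i"
    and nu_sum: "(\<Sum>i\<in>M. nu i) = 1" and j: "j \<in> M"
  shows "rho M nu Q j = w j"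
proof -
  text \<open>The ratios \<open>x t = \<nu> Q\<^sup>t / w\<close> satisfy \<open>x (t + 1) = Q x t\<close>, so their oscillation
    decays geometrically, and their \<open>w\<close>-weighted mean is always \<open>1\<close>.\<close>
  define x where "x t k = vecmatpow M nu Q t k / w k" for t k
  define osc where "osc t = Max (x t ` M) - Min (x t ` M)" for t
  obtain \<delta> where \<delta>: "0 < \<delta>" "\<delta> \<le> 1" and \<delta>_le: "\<And>i k. i \<in> M \<Longrightarrow> k \<in> M \<Longrightarrow> \<delta> \<le> Q i k"
    using stochastic_matrix_uniform_lower_bound[of M Q, OF fin ne Q_pos row] by blast
  have osc_Suc: "osc (Suc t) \<le> (1 - \<delta>) * osc t" for t
  proof -
    have "x (Suc t) ` M = (\<lambda>k. \<Sum>i\<in>M. Q k i * x t i) ` M"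
      unfolding x_def by (rule image_cong[OF refl reversible_ratio_step[OF w_pos balance]])
    then show ?thesis
      using oscillation_contraction[OF fin ne less_imp_le[OF \<delta>(1)] \<delta>_le row, where x = "x t"]
      by (simp add: osc_def)
  qed
  have osc_le: "osc t \<le> osc 0 * (1 - \<delta>) ^ t" for t
  proof (induction t)
    case (Suc t)
    have "osc (Suc t) \<le> (1 - \<delta>) * osc t" by (rule osc_Suc)
    also have "\<dots> \<le> (1 - \<delta>) * (osc 0 * (1 - \<delta>) ^ t)"
      using Suc.IH \<delta> by (intro mult_left_mono) auto
    finally show ?case by (simp add: mult_ac)
  qed simp
  show ?thesis
  proof (rule rho_eqI)
    fix t
    have "w k * x t k = vecmatpow M nu Q t k" if "k \<in> M" for k
      using w_pos[OF that] by (simp add: x_def)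
    then have "(\<Sum>k\<in>M. w k * x t k) = 1"
      using vecmatpow_sum[of M Q nu, OF fin row nu_sum] by simp
    then have "Min (x t ` M) \<le> 1" "1 \<le> Max (x t ` M)"
      using weighted_mean_between_Min_Max[OF fin less_imp_le[OF w_pos] w_sum] by blast+
    moreover have "Min (x t ` M) \<le> x t j" "x t j \<le> Max (x t ` M)"
      using fin j by simp_all
    ultimately have "\<bar>x t j - 1\<bar> \<le> osc 0 * (1 - \<delta>) ^ t"
      using osc_le[of t] by (simp add: osc_def abs_le_iff)
    moreover have "\<bar>vecmatpow M nu Q t j - w j\<bar> = w j * \<bar>x t j - 1\<bar>"
      using w_pos[OF j] by (simp add: x_def abs_mult flip: abs_minus_commute) (simp add: field_simps)
    ultimately show "\<bar>vecmatpow M nu Q t j - w j\<bar> \<le> w j * osc 0 * (1 - \<delta>) ^ t"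
      using w_pos[OF j] by (simp add: mult_left_mono mult.assoc)
  qed (use \<delta> in auto)
qed

lemma MSC_nu_sum: "MSC Q nu \<Longrightarrow> menu M \<Longrightarrow> (\<Sum>i\<in>M. nu M i) = 1"
  unfolding MSC_def by blast

lemma MSC_diag_pos: "MSC Q nu \<Longrightarrow> menu M \<Longrightarrow> i \<in> M \<Longrightarrow> 0 < Q M i i"
  unfolding MSC_def by blast

lemma MSC_row_sum:
  assumes "MSC Q nu" "menu M" "i \<in> M"
  shows "(\<Sum>j\<in>M. Q M i j) = 1"
proof -
  have "Q M i i = 1 - (\<Sum>k\<in>M - {i}. Q M i k)"
    using assms unfolding MSC_def by blast
  then show ?thesis using assms(3) by (simp add: sum.remove)
qed

lemma MSC_pair_ratio:
  "MSC Q nu \<Longrightarrow> menu M \<Longrightarrow> i \<in> M \<Longrightarrow> j \<in> M \<Longrightarrow> i \<noteq> j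
    \<Longrightarrow> Q {i, j} i j * Q M j i = Q {i, j} j i * Q M i j"
  unfolding MSC_def by blast

lemma rationalizes_rho:
  "rationalizes Q nu p \<Longrightarrow> menu M \<Longrightarrow> i \<in> M \<Longrightarrow> p i M = rho M (nu M) (Q M) i"
  unfolding rationalizes_def by blast

lemma menu_pair: "menu {i, j}"
  by (simp add: menu_def)

lemma menu_UNIV: "menu UNIV"
  by (simp add: menu_def)

lemma stoch_choice_sum: "stoch_choice p \<Longrightarrow> menu M \<Longrightarrow> (\<Sum>i\<in>M. p i M) = 1"
  unfolding stoch_choice_def by blast

lemma stoch_choice_nonneg: "stoch_choice p \<Longrightarrow> menu M \<Longrightarrow> 0 \<le> p i M"
  unfolding stoch_choice_def by blast

lemma luce_form_imp_positive_iia: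
  fixes p :: "'a::finite \<Rightarrow> 'a set \<Rightarrow> real"
  assumes u_pos: "\<And>x. 0 < u x"
    and luce: "\<And>M i. menu M \<Longrightarrow> i \<in> M \<Longrightarrow> p i M = u i / (\<Sum>k\<in>M. u k)"
  shows "positive_sc p \<and> iia p"
proof
  show "positive_sc p"
    unfolding positive_sc_def
  proof (intro allI impI ballI)
    fix M :: "'a set" and i assume "menu M" "i \<in> M"
    moreover from \<open>menu M\<close> have "0 < (\<Sum>k\<in>M. u k)"
      using u_pos by (intro sum_pos) (auto simp: menu_def)
    ultimately show "0 < p i M" by (simp add: luce u_pos)
  qed
  show "iia p"
    unfolding iia_def by (simp add: luce menu_pair)
qed

lemma detailed_balance_pos:
  fixes w :: "'a \<Rightarrow> real"
  assumes w_sum: "(\<Sum>i\<in>M. w i) = 1"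
    and Q_pos: "\<And>i j. i \<in> M \<Longrightarrow> j \<in> M \<Longrightarrow> i \<noteq> j \<Longrightarrow> 0 < Q i j"
    and balance: "\<And>i j. i \<in> M \<Longrightarrow> j \<in> M \<Longrightarrow> Q j i * w j = w i * Q i j"
    and i: "i \<in> M"
  shows "0 < w i"
proof -
  have "\<exists>k\<in>M. 0 < w k"
  proof (rule ccontr)
    assume "\<not> (\<exists>k\<in>M. 0 < w k)"
    then have "(\<Sum>k\<in>M. w k) \<le> 0" by (intro sum_nonpos) (auto simp: not_less)
    with w_sum show False by simp
  qed
  then obtain k where k: "k \<in> M" "0 < w k" ..
  show ?thesis
  proof (cases "i = k")
    case False
    have "0 < w k * Q k i" using k Q_pos[OF k(1) i] False by simp
    then have "0 < Q i k * w i" using balance[OF k(1) i] by simp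
    with Q_pos[OF i k(1)] False show ?thesis by (simp add: zero_less_mult_iff)
  qed (use k in simp)
qed

lemma reversible_rationalization_imp_positive_iia:
  fixes p :: "'a::finite \<Rightarrow> 'a set \<Rightarrow> real"
  assumes sc: "stoch_choice p" and rat: "rationalizes Q nu p"
    and fc_rev: "\<forall>M. menu M \<longrightarrow> fully_comparable M (Q M) \<and> reversible M (nu M) (Q M)"
  shows "positive_sc p \<and> iia p"
proof
  have msc: "MSC Q nu" using rat unfolding rationalizes_def by blast
  have Q_pos: "0 < Q M i j" if "menu M" "i \<in> M" "j \<in> M" "i \<noteq> j" for M i j
    using fc_rev that unfolding fully_comparable_def by blast
  have balance: "Q M j i * p j M = p i M * Q M i j" if "menu M" "i \<in> M" "j \<in> M" for M i j
    using fc_rev that rationalizes_rho[OF rat \<open>menu M\<close>] unfolding reversible_def by auto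
  show "positive_sc p"
    unfolding positive_sc_def
    using detailed_balance_pos[OF stoch_choice_sum[OF sc] Q_pos balance] by blast
  show "iia p"
    unfolding iia_def
  proof (intro allI impI ballI)
    fix M :: "'a set" and i j assume M: "menu M" and i: "i \<in> M" and j: "j \<in> M"
    show "p i {i, j} * p j M = p j {i, j} * p i M"
    proof (cases "i = j")
      case False
      have pair: "Q {i, j} j i * p j {i, j} = p i {i, j} * Q {i, j} i j"
        using balance[of "{i, j}" i j] by (simp add: menu_pair)
      have "Q {i, j} i j * Q M j i * (p i {i, j} * p j M)
          = p i {i, j} * Q {i, j} i j * (Q M j i * p j M)" by (simp add: mult_ac)
      also have "\<dots> = Q {i, j} j i * Q M i j * (p j {i, j} * p i M)"
        by (simp add: balance[OF M i j] flip: pair)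
      also have "\<dots> = Q {i, j} i j * Q M j i * (p j {i, j} * p i M)"
        by (simp add: MSC_pair_ratio[OF msc M i j False])
      finally show ?thesis
        using Q_pos[of "{i, j}" i j] Q_pos[OF M j i] False by (simp add: menu_pair)
    qed simp
  qed
qed

lemma utility_ratio_rationalization_imp_luce_form:
  fixes p :: "'a::finite \<Rightarrow> 'a set \<Rightarrow> real"
  assumes rat: "rationalizes Q nu p" and u_pos: "\<forall>x. 0 < u x"
    and ratio: "\<forall>M. menu M \<longrightarrow> (\<forall>i\<in>M. \<forall>j\<in>M. i \<noteq> j \<longrightarrow>
                   Q M i j > 0 \<and> Q M i j / Q M j i = u j / u i)"
    and M: "menu M" and i: "i \<in> M"
  shows "p i M = u i / (\<Sum>k\<in>M. u k)"
proof -
  have msc: "MSC Q nu" using rat unfolding rationalizes_def by blast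
  define U where "U = (\<Sum>k\<in>M. u k)"
  have "0 < U"
    using M u_pos unfolding U_def menu_def by (intro sum_pos) auto
  have Q_pos: "0 < Q M a b" if "a \<in> M" "b \<in> M" for a b
    using ratio M that MSC_diag_pos[OF msc M] by (cases "a = b") auto
  have balance: "u a / U * Q M a b = u b / U * Q M b a" if ab: "a \<in> M" "b \<in> M" for a b
  proof (cases "a = b")
    case False
    then have "Q M a b / Q M b a = u b / u a" using ratio M ab by blast
    then show ?thesis
      using Q_pos[OF ab(2,1)] u_pos[rule_format, of a] by (simp add: field_simps)
  qed simp
  have "rho M (nu M) (Q M) i = u i / U"
  proof (rule rho_eq_reversible_distribution[OF finite _ Q_pos MSC_row_sum[OF msc M]])
    show "M \<noteq> {}" using M by (simp add: menu_def)
    show "0 < u a / U" for a using \<open>0 < U\<close> u_pos by simp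
    show "(\<Sum>a\<in>M. u a / U) = 1"
      using \<open>0 < U\<close> by (simp add: U_def sum_divide_distrib[symmetric])
  qed (use balance MSC_nu_sum[OF msc M] i in simp_all)
  then show ?thesis
    using rationalizes_rho[OF rat M i] by (simp add: U_def)
qed

lemma positive_iia_proportional:
  fixes p :: "'a::finite \<Rightarrow> 'a set \<Rightarrow> real"
  assumes pos: "positive_sc p" and iia: "iia p" and M: "menu M" and i: "i \<in> M" and j: "j \<in> M"
  shows "p i M * p j UNIV = p j M * p i UNIV"
proof (cases "i = j")
  case False
  have in_M: "p i {i, j} * p j M = p j {i, j} * p i M"
    using iia M i j unfolding iia_def by blast
  have in_UNIV: "p i {i, j} * p j UNIV = p j {i, j} * p i UNIV"
    using iia menu_UNIV unfolding iia_def by blast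
  have "p j {i, j} * (p i M * p j UNIV) = (p j {i, j} * p i M) * p j UNIV"
    by (simp add: mult_ac)
  also have "\<dots> = p j M * (p i {i, j} * p j UNIV)"
    by (simp add: flip: in_M)
  also have "\<dots> = p j {i, j} * (p j M * p i UNIV)"
    by (subst in_UNIV) (simp add: mult_ac)
  finally have "p j {i, j} * (p i M * p j UNIV) = p j {i, j} * (p j M * p i UNIV)" .
  moreover have "0 < p j {i, j}"
    using pos menu_pair unfolding positive_sc_def by blast
  ultimately show ?thesis by simp
qed simp

text \<open>The factor \<open>1/2\<close> keeps the diagonal positive whenever \<open>u\<close> sums to \<open>1\<close> on \<open>X\<close>.\<close>

definition luce_chain :: "('a \<Rightarrow> real) \<Rightarrow> 'a set \<Rightarrow> 'a \<Rightarrow> 'a \<Rightarrow> real" where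
  "luce_chain u M i j = (if i = j then 1 - (\<Sum>k\<in>M - {i}. u k) / 2 else u j / 2)"

lemma luce_chain_diag: "luce_chain u M i i = 1 - (\<Sum>k\<in>M - {i}. luce_chain u M i k)"
proof -
  have "(\<Sum>k\<in>M - {i}. luce_chain u M i k) = (\<Sum>k\<in>M - {i}. u k / 2)"
    by (intro sum.cong) (auto simp: luce_chain_def)
  then show ?thesis by (simp add: luce_chain_def sum_divide_distrib)
qed

lemma luce_chain_row_sum: "finite M \<Longrightarrow> i \<in> M \<Longrightarrow> (\<Sum>j\<in>M. luce_chain u M i j) = 1"
  using luce_chain_diag[of u M i] by (simp add: sum.remove)

lemma luce_chain_pos:
  fixes u :: "'a::finite \<Rightarrow> real"
  assumes u_pos: "\<And>x. 0 < u x" and u_sum: "(\<Sum>x\<in>UNIV. u x) = 1"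
  shows "0 < luce_chain u M i j"
proof (cases "i = j")
  case True
  have "(\<Sum>k\<in>M - {i}. u k) \<le> (\<Sum>x\<in>UNIV. u x)"
    using u_pos by (intro sum_mono2) (auto simp: less_imp_le)
  with True u_sum show ?thesis by (simp add: luce_chain_def)
qed (simp add: luce_chain_def u_pos)

lemma positive_iia_imp_luce_rationalization:
  fixes p :: "'a::finite \<Rightarrow> 'a set \<Rightarrow> real"
  assumes sc: "stoch_choice p" and pos: "positive_sc p" and iia: "iia p"
  shows "\<exists>Q nu. rationalizes Q nu p \<and>
     (\<forall>M. menu M \<longrightarrow> fully_comparable M (Q M) \<and> reversible M (nu M) (Q M)) \<and>
     (\<exists>u :: 'a \<Rightarrow> real. (\<forall>x. u x > 0) \<and>
        (\<forall>M. menu M \<longrightarrow> (\<forall>i\<in>M. \<forall>j\<in>M. i \<noteq> j \<longrightarrow>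
            Q M i j > 0 \<and> Q M i j / Q M j i = u j / u i)))"
proof -
  define u where "u k = p k UNIV" for k
  define Q where "Q M = luce_chain u M" for M
  define nu where "nu M i = p i M" for M :: "'a set" and i
  have u_pos: "0 < u k" for k
    using pos menu_UNIV unfolding positive_sc_def u_def by blast
  have Q_pos: "0 < Q M i j" for M i j
    unfolding Q_def by (rule luce_chain_pos[OF u_pos]) (simp add: u_def stoch_choice_sum[OF sc menu_UNIV])
  have balance: "p i M * Q M i j = p j M * Q M j i" if "menu M" "i \<in> M" "j \<in> M" for M i j
    using positive_iia_proportional[OF pos iia that]
    by (cases "i = j") (simp_all add: Q_def luce_chain_def u_def mult_ac)
  have rho_p: "rho M (nu M) (Q M) i = p i M" if M: "menu M" and i: "i \<in> M" for M i
    unfolding nu_def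
    by (rule rho_stationary[OF finite detailed_balance_imp_stationary[OF balance[OF M]] i])
      (simp_all add: Q_def luce_chain_row_sum)
  have diag: "Q M i i = 1 - (\<Sum>k\<in>M - {i}. Q M i k)" for M i
    unfolding Q_def by (rule luce_chain_diag)
  have pair_ratio: "Q {i, j} i j * Q M j i = Q {i, j} j i * Q M i j" if "i \<noteq> j" for M i j
    using that by (simp add: Q_def luce_chain_def)
  have "MSC Q nu"
    by (simp add: MSC_def nu_def Q_pos less_imp_le diag[THEN eqTrueI] pair_ratio[THEN eqTrueI]
        stoch_choice_nonneg[OF sc] stoch_choice_sum[OF sc])
  then have "rationalizes Q nu p"
    by (simp add: rationalizes_def rho_p)
  moreover have "fully_comparable M (Q M) \<and> reversible M (nu M) (Q M)" if "menu M" for M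
    using Q_pos balance[OF that] rho_p[OF that]
    by (auto simp: fully_comparable_def reversible_def nu_def mult.commute)
  moreover have "Q M i j / Q M j i = u j / u i" if "i \<noteq> j" for M i j
    using that u_pos by (simp add: Q_def luce_chain_def)
  ultimately show ?thesis
    using u_pos Q_pos by blast
qed

theorem theorem3:
  fixes p :: "'a::finite \<Rightarrow> 'a set \<Rightarrow> real"
  assumes "stoch_choice p"
  shows "((\<exists>Q nu. rationalizes Q nu p \<and>
             (\<forall>M. menu M \<longrightarrow> fully_comparable M (Q M) \<and> reversible M (nu M) (Q M)))
          \<longleftrightarrow> (positive_sc p \<and> iia p))
       \<and> ((positive_sc p \<and> iia p) \<longleftrightarrow>
          (\<exists>Q nu. rationalizes Q nu p \<and>
             (\<exists>u :: 'a \<Rightarrow> real. (\<forall>x. u x > 0) \<and>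
               (\<forall>M. menu M \<longrightarrow> (\<forall>i\<in>M. \<forall>j\<in>M. i \<noteq> j \<longrightarrow>
                   Q M i j > 0 \<and> Q M i j / Q M j i = u j / u i)))))"
proof -
  have utility_imp: "positive_sc p \<and> iia p"
    if "\<exists>Q nu. rationalizes Q nu p \<and> (\<exists>u :: 'a \<Rightarrow> real. (\<forall>x. u x > 0) \<and>
          (\<forall>M. menu M \<longrightarrow> (\<forall>i\<in>M. \<forall>j\<in>M. i \<noteq> j \<longrightarrow>
              Q M i j > 0 \<and> Q M i j / Q M j i = u j / u i)))"
  proof -
    from that obtain Q nu u where rat: "rationalizes Q nu p" and u_pos: "\<forall>x. u x > 0"
      and ratio: "\<forall>M. menu M \<longrightarrow> (\<forall>i\<in>M. \<forall>j\<in>M. i \<noteq> j \<longrightarrow>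
              Q M i j > 0 \<and> Q M i j / Q M j i = u j / u i)"
      by blast
    show ?thesis
      using luce_form_imp_positive_iia[of u p]
        utility_ratio_rationalization_imp_luce_form[OF rat u_pos ratio] u_pos
      by blast
  qed
  show ?thesis
    using reversible_rationalization_imp_positive_iia[OF assms] utility_imp
      positive_iia_imp_luce_rationalization[OF assms]
    by blast
qed

end
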